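(* Let $\mathcal M$ be a factor and let $U=U^*\in\mathcal M$ be a unitary with $U\neq I$ and $U\neq -I$. Then there is a nonzero projection $E\in\mathcal M$ such that $EUE=0$. *)

theory Defs
  imports "HOL-Analysis.Analysis"
begin

class chilbert = banach +
  fixes scaleC :: "complex \<Rightarrow> 'a \<Rightarrow> 'a"
    and cinner :: "'a \<Rightarrow> 'a \<Rightarrow> complex"
  assumes scaleC_add_right: "scaleC a (x + y) = scaleC a x + scaleC a y"
    and scaleC_add_left: "scaleC (a + b) x = scaleC a x + scaleC b x"
    and scaleC_scaleC: "scaleC a (scaleC b x) = scaleC (a * b) x"
    and scaleC_one: "scaleC 1 x = x"
    and scaleC_of_real: "scaleC (complex_of_real r) x = scaleR r x"
    and cinner_conj: "cinner x y = cnj (cinner y x)"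
    and cinner_add_right: "cinner x (y + z) = cinner x y + cinner x z"
    and cinner_scaleC_right: "cinner x (scaleC a y) = a * cinner x y"
    and cinner_self_norm: "cinner x x = complex_of_real ((norm x)\<^sup>2)"

definition bounded_clinear_op :: "('a::chilbert \<Rightarrow> 'a) \<Rightarrow> bool" where
  "bounded_clinear_op T \<longleftrightarrow>
     (\<forall>x y. T (x + y) = T x + T y) \<and> (\<forall>c x. T (scaleC c x) = scaleC c (T x)) \<and>
     (\<exists>K. \<forall>x. norm (T x) \<le> norm x * K)"

definition adj :: "('a::chilbert \<Rightarrow> 'a) \<Rightarrow> ('a \<Rightarrow> 'a)" where
  "adj T = (THE S. \<forall>x y. cinner (T x) y = cinner x (S y))"

definition commutant :: "('a::chilbert \<Rightarrow> 'a) set \<Rightarrow> ('a \<Rightarrow> 'a) set" where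
  "commutant S = {T. bounded_clinear_op T \<and> (\<forall>A\<in>S. T \<circ> A = A \<circ> T)}"

definition von_neumann_algebra :: "('a::chilbert \<Rightarrow> 'a) set \<Rightarrow> bool" where
  "von_neumann_algebra M \<longleftrightarrow>
     M \<subseteq> Collect bounded_clinear_op \<and> id \<in> M \<and>
     (\<forall>A\<in>M. \<forall>B\<in>M. (\<lambda>x. A x + B x) \<in> M \<and> A \<circ> B \<in> M) \<and>
     (\<forall>c. \<forall>A\<in>M. (\<lambda>x. scaleC c (A x)) \<in> M) \<and>
     (\<forall>A\<in>M. adj A \<in> M) \<and>
     commutant (commutant M) = M"

definition factor :: "('a::chilbert \<Rightarrow> 'a) set \<Rightarrow> bool" where
  "factor M \<longleftrightarrow> von_neumann_algebra M \<and>
     M \<inter> commutant M = range (\<lambda>c::complex. (\<lambda>x. scaleC c x))"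

definition unitary_op :: "('a::chilbert \<Rightarrow> 'a) \<Rightarrow> bool" where
  "unitary_op U \<longleftrightarrow> bounded_clinear_op U \<and> U \<circ> adj U = id \<and> adj U \<circ> U = id"

definition projection_op :: "('a::chilbert \<Rightarrow> 'a) \<Rightarrow> bool" where
  "projection_op E \<longleftrightarrow> bounded_clinear_op E \<and> adj E = E \<and> E \<circ> E = E"

end

theory Submission
  imports Defs
begin

text \<open>
Since \<open>U = U\<^sup>*\<close> is unitary, \<open>U\<^sup>2 = I\<close>. As \<open>U \<noteq> \<plusminus>I\<close> and \<open>\<M>\<close> is a factor, \<open>U\<close> is not central,
so it fails to commute with some self-adjoint \<open>h \<in> \<M>\<close>. Then \<open>A = i(Uh - hU)\<close> is a nonzero
self-adjoint element of \<open>\<M>\<close> with \<open>UA = -AU\<close>. Writing \<open>A = A\<^sub>+ - A\<^sub>-\<close> with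
\<open>A\<^sub>\<plusminus> = (|A| \<plusminus> A)/2\<close>, we get \<open>UA\<^sub>+ = A\<^sub>-U\<close> and \<open>A\<^sub>-A\<^sub>+ = 0\<close>. The range projection \<open>E\<close> of
\<open>A\<^sub>+\<close> is nonzero and lies in \<open>\<M>\<close>, and \<open>U\<close> maps the range of \<open>E\<close> into \<open>ker A\<^sub>+\<close>, which is
orthogonal to it; hence \<open>EUE = 0\<close>. The square root defining \<open>|A|\<close> is obtained from the binomial
series of \<open>\<surd>(1 - t)\<close>, which converges absolutely at \<open>t = 1\<close>.
\<close>

section \<open>Complex inner product spaces\<close>

lemma cinner_scaleC_left: "cinner (scaleC a x) y = cnj a * cinner x y"
proof -
  have "cinner (scaleC a x) y = cnj (cinner y (scaleC a x))" by (rule cinner_conj)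
  also have "\<dots> = cnj a * cnj (cinner y x)" by (simp add: cinner_scaleC_right)
  also have "cnj (cinner y x) = cinner x y" by (metis cinner_conj complex_cnj_cnj)
  finally show ?thesis .
qed

lemma cinner_add_left: "cinner (x + y) z = cinner x z + cinner y z"
  by (metis cinner_conj cinner_add_right complex_cnj_add)

lemma cinner_zero_right [simp]: "cinner x 0 = 0"
  using cinner_add_right[of x 0 0] by simp

lemma cinner_zero_left [simp]: "cinner 0 x = 0"
  using cinner_add_left[of 0 0 x] by simp

lemma cinner_minus_right: "cinner x (- y) = - cinner x y"
  using cinner_add_right[of x y "-y"] by (simp add: add_eq_0_iff)

lemma cinner_minus_left: "cinner (- x) y = - cinner x y"
  using cinner_add_left[of x "-x" y] by (simp add: add_eq_0_iff)

lemma cinner_diff_right: "cinner x (y - z) = cinner x y - cinner x z"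
  using cinner_add_right[of x y "-z"] cinner_minus_right[of x z] by simp

lemma cinner_diff_left: "cinner (x - y) z = cinner x z - cinner y z"
  using cinner_add_left[of x "-y" z] cinner_minus_left[of y z] by simp

lemma cinner_scaleR_right: "cinner x (r *\<^sub>R y) = of_real r * cinner x y"
  by (metis scaleC_of_real cinner_scaleC_right)

lemma cinner_scaleR_left: "cinner (r *\<^sub>R x) y = of_real r * cinner x y"
  by (metis scaleC_of_real cinner_scaleC_left complex_cnj_complex_of_real)

lemma cinner_self_eq_0 [simp]: "cinner x x = 0 \<longleftrightarrow> x = 0"
  by (simp add: cinner_self_norm)

lemma cinner_eq_0_sym: "cinner x y = 0 \<longleftrightarrow> cinner y x = 0"
  by (metis cinner_conj complex_cnj_zero)

lemma scaleC_zero_left [simp]: "scaleC 0 x = 0"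
  by (metis scaleC_of_real of_real_0 scale_zero_left)

lemma scaleC_zero_right [simp]: "scaleC a 0 = 0"
  using scaleC_add_right[of a 0 0] by simp

lemma scaleC_minus_right: "scaleC a (- x) = - scaleC a x"
proof -
  have "scaleC a x + scaleC a (-x) = 0" by (metis scaleC_add_right add.right_inverse scaleC_zero_right)
  then show ?thesis by (simp add: add_eq_0_iff)
qed

lemma scaleC_diff_right: "scaleC a (x - y) = scaleC a x - scaleC a y"
  using scaleC_add_right[of a x "-y"] scaleC_minus_right[of a y] by simp

lemma scaleC_minus_left: "scaleC (- a) x = - scaleC a x"
proof -
  have "scaleC a x + scaleC (-a) x = 0" by (metis scaleC_add_left add.right_inverse scaleC_zero_left)
  then show ?thesis by (simp add: add_eq_0_iff)
qed

lemma scaleC_diff_left: "scaleC (a - b) x = scaleC a x - scaleC b x"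
  using scaleC_add_left[of a "-b" x] scaleC_minus_left[of b x] by simp

lemma scaleC_minus_one: "scaleC (-1) x = - x"
  using scaleC_minus_left[of 1 x] scaleC_one by simp

lemma scaleR_scaleC: "r *\<^sub>R scaleC a x = scaleC (of_real r * a) x"
  by (metis scaleC_of_real scaleC_scaleC)

lemma scaleC_scaleR: "scaleC a (r *\<^sub>R x) = scaleC (of_real r * a) x"
  by (metis scaleC_of_real scaleC_scaleC mult.commute)

lemma norm_scaleC: "norm (scaleC a x) = cmod a * norm x"
proof -
  have "cinner (scaleC a x) (scaleC a x) = cnj a * a * cinner x x"
    by (simp add: cinner_scaleC_left cinner_scaleC_right)
  also have "\<dots> = complex_of_real ((cmod a * norm x)\<^sup>2)"
    using complex_norm_square[of a] by (simp add: cinner_self_norm power_mult_distrib mult.commute)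
  finally have "(norm (scaleC a x))\<^sup>2 = (cmod a * norm x)\<^sup>2"
    unfolding cinner_self_norm using of_real_eq_iff by blast
  then show ?thesis
    by (simp add: power2_eq_iff_nonneg)
qed

lemma scaleC_eq_0_iff: "scaleC c x = 0 \<longleftrightarrow> c = 0 \<or> x = 0"
  by (metis norm_eq_zero norm_scaleC mult_eq_0_iff)

lemma bounded_linear_scaleC: "bounded_linear (scaleC c)"
proof (rule bounded_linear_intro[where K="cmod c"])
  show "scaleC c (x + y) = scaleC c x + scaleC c y" for x y by (rule scaleC_add_right)
  show "scaleC c (r *\<^sub>R x) = r *\<^sub>R scaleC c x" for r x
    by (simp add: scaleC_scaleR scaleR_scaleC)
  show "norm (scaleC c x) \<le> norm x * cmod c" for x by (simp add: norm_scaleC)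
qed

lemma power2_norm_diff:
  "(norm (x - y))\<^sup>2 = (norm x)\<^sup>2 - 2 * Re (cinner x y) + (norm y)\<^sup>2"
proof -
  have "cinner (x - y) (x - y) = cinner x x - (cinner x y + cnj (cinner x y)) + cinner y y"
    by (simp add: cinner_diff_left cinner_diff_right cinner_conj[of y x])
  then have "Re (cinner (x - y) (x - y)) = Re (cinner x x - (cinner x y + cnj (cinner x y)) + cinner y y)"
    by simp
  then show ?thesis by (simp add: cinner_self_norm del: of_real_power)
qed

lemma power2_norm_add:
  "(norm (x + y))\<^sup>2 = (norm x)\<^sup>2 + 2 * Re (cinner x y) + (norm y)\<^sup>2"
  using power2_norm_diff[of x "-y"] by (simp add: cinner_minus_right)

lemma parallelogram_law:
  fixes a b :: "'a::chilbert"
  shows "(norm (a - b))\<^sup>2 + (norm (a + b))\<^sup>2 = 2 * (norm a)\<^sup>2 + 2 * (norm b)\<^sup>2"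
  using power2_norm_add[of a b] power2_norm_diff[of a b] by simp

lemma norm_cinner_le: "cmod (cinner x y) \<le> norm x * norm y"
proof (cases "x = 0")
  case True then show ?thesis by simp
next
  case False
  define t where "t = cinner x y / cinner x x"
  define z where "z = y - scaleC t x"
  have "cinner x x \<noteq> 0" using False by simp
  then have "cinner x z = 0"
    by (simp add: z_def t_def cinner_diff_right cinner_scaleC_right)
  then have "cinner z (scaleC t x) = 0"
    by (simp add: cinner_scaleC_right cinner_eq_0_sym)
  moreover have "y = z + scaleC t x" by (simp add: z_def)
  ultimately have "(norm y)\<^sup>2 = (norm z)\<^sup>2 + (norm (scaleC t x))\<^sup>2"
    using power2_norm_add[of z "scaleC t x"] by simp
  then have "(norm (scaleC t x))\<^sup>2 \<le> (norm y)\<^sup>2" by simp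
  moreover have "norm (scaleC t x) = cmod (cinner x y) / norm x"
  proof -
    have "cmod (cinner x x) = (norm x)\<^sup>2" by (simp add: cinner_self_norm del: of_real_power)
    then show ?thesis using False
      by (simp add: norm_scaleC t_def norm_divide power2_eq_square)
  qed
  ultimately have "cmod (cinner x y) / norm x \<le> norm y"
    using power2_le_imp_le by fastforce
  then show ?thesis using False by (simp add: divide_le_eq mult.commute)
qed

lemma cinner_extensionality: "(\<And>z. cinner z x = cinner z y) \<Longrightarrow> x = y"
  by (metis cinner_diff_right cinner_self_eq_0 right_minus_eq)

lemma bounded_linear_cinner_right: "bounded_linear (cinner x)"
proof (rule bounded_linear_intro[where K="norm x"])
  show "cinner x (a + b) = cinner x a + cinner x b" for a b by (rule cinner_add_right)
  show "cinner x (r *\<^sub>R a) = r *\<^sub>R cinner x a" for r a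
    by (simp add: cinner_scaleR_right scaleR_conv_of_real)
  show "norm (cinner x a) \<le> norm a * norm x" for a
    using norm_cinner_le[of x a] by (simp add: mult.commute)
qed

lemma bounded_linear_cinner_left: "bounded_linear (\<lambda>x. cinner x y)"
proof (rule bounded_linear_intro[where K="norm y"])
  show "cinner (a + b) y = cinner a y + cinner b y" for a b by (rule cinner_add_left)
  show "cinner (r *\<^sub>R a) y = r *\<^sub>R cinner a y" for r a
    by (simp add: cinner_scaleR_left scaleR_conv_of_real)
  show "norm (cinner a y) \<le> norm a * norm y" for a
    using norm_cinner_le[of a y] by simp
qed

section \<open>Orthogonal projections onto closed subspaces\<close>

definition csubspace :: "'a::chilbert set \<Rightarrow> bool" where
  "csubspace K \<longleftrightarrow> 0 \<in> K \<and> (\<forall>x\<in>K. \<forall>y\<in>K. x + y \<in> K) \<and> (\<forall>c. \<forall>x\<in>K. scaleC c x \<in> K)"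

lemma csubspace_diff: "csubspace K \<Longrightarrow> x \<in> K \<Longrightarrow> y \<in> K \<Longrightarrow> x - y \<in> K"
  unfolding csubspace_def by (metis scaleC_minus_one diff_conv_add_uminus)

lemma csubspace_convex: "csubspace K \<Longrightarrow> convex K"
  unfolding csubspace_def convex_def by (metis scaleC_of_real)

lemma convex_nearest_parallelogram:
  fixes x :: "'a::chilbert"
  assumes "convex K" "a \<in> K" "b \<in> K" "0 \<le> d" and d: "\<And>k. k \<in> K \<Longrightarrow> d \<le> norm (x - k)"
  shows "(norm (a - b))\<^sup>2 \<le> 2 * (norm (x - a))\<^sup>2 + 2 * (norm (x - b))\<^sup>2 - 4 * d\<^sup>2"
proof -
  define mid where "mid = (1/2::real) *\<^sub>R a + (1/2::real) *\<^sub>R b"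
  have "mid \<in> K" using assms(1-3) unfolding mid_def convex_def by simp
  then have "d \<le> norm (x - mid)" by (rule d)
  moreover have "(x - b) + (x - a) = 2 *\<^sub>R (x - mid)"
    by (simp add: mid_def algebra_simps scaleR_2)
  ultimately have "4 * d\<^sup>2 \<le> (norm ((x - b) + (x - a)))\<^sup>2"
    using \<open>0 \<le> d\<close> by (simp add: power_mult_distrib power_mono)
  moreover have "(norm (a - b))\<^sup>2 = 2 * (norm (x - b))\<^sup>2 + 2 * (norm (x - a))\<^sup>2
      - (norm ((x - b) + (x - a)))\<^sup>2"
    using parallelogram_law[of "x - b" "x - a"] by (simp add: algebra_simps)
  ultimately show ?thesis by linarith
qed

lemma minimizing_sequence_Cauchy:
  fixes x :: "'a::chilbert"
  assumes "convex K" and kK: "\<And>n. k n \<in> K" and "0 \<le> d"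
    and d_le: "\<And>k. k \<in> K \<Longrightarrow> d \<le> norm (x - k)"
    and kd: "\<And>n. norm (x - k n) < d + inverse (real (Suc n))"
  shows "Cauchy k"
proof (rule metric_CauchyI)
  define e where "e n = inverse (real (Suc n))" for n
  have e: "0 < e n" "e n \<le> 1" for n
    by (auto simp: e_def field_simps)
  then have e_sq: "(e n)\<^sup>2 \<le> e n" for n
    by (auto simp: power2_eq_square mult_left_le less_imp_le)
  have k_close: "(norm (k n - k m))\<^sup>2 \<le> (4 * d + 2) * (e n + e m)" for n m
  proof -
    have "(norm (x - k n))\<^sup>2 \<le> (d + e n)\<^sup>2" "(norm (x - k m))\<^sup>2 \<le> (d + e m)\<^sup>2"
      unfolding e_def by (meson kd less_imp_le norm_ge_zero power_mono)+
    then have "(norm (k n - k m))\<^sup>2 \<le> 2 * (d + e n)\<^sup>2 + 2 * (d + e m)\<^sup>2 - 4 * d\<^sup>2"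
      using convex_nearest_parallelogram[OF \<open>convex K\<close> kK kK \<open>0 \<le> d\<close> d_le, of n m] by linarith
    also have "\<dots> = 4 * d * (e n + e m) + 2 * (e n)\<^sup>2 + 2 * (e m)\<^sup>2"
      by (simp add: power2_eq_square algebra_simps)
    also have "\<dots> \<le> (4 * d + 2) * (e n + e m)"
      using e_sq[of n] e_sq[of m] by (simp add: algebra_simps)
    finally show ?thesis .
  qed
  fix eps :: real assume eps: "0 < eps"
  obtain N :: nat where N: "2 * (4 * d + 2) / eps\<^sup>2 < real N"
    using reals_Archimedean2 by blast
  have "dist (k m) (k n) < eps" if "m \<ge> N" "n \<ge> N" for m n
  proof -
    have "e m \<le> e N" "e n \<le> e N"
      using that by (auto simp: e_def intro!: le_imp_inverse_le)
    then have "(norm (k m - k n))\<^sup>2 \<le> (4 * d + 2) * (2 * e N)"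
      using k_close[of m n] \<open>0 \<le> d\<close> by (smt (verit) mult_left_mono)
    also have "\<dots> < eps\<^sup>2"
      using N eps by (simp add: e_def field_simps) (smt (verit) zero_less_power)
    finally show ?thesis using eps by (simp add: dist_norm power_less_imp_less_base)
  qed
  then show "\<exists>M. \<forall>m\<ge>M. \<forall>n\<ge>M. dist (k m) (k n) < eps" by blast
qed

lemma nearest_point_exists:
  fixes x :: "'a::chilbert"
  assumes "closed K" "convex K" "K \<noteq> {}"
  shows "\<exists>p\<in>K. \<forall>k\<in>K. norm (x - p) \<le> norm (x - k)"
proof -
  define d where "d = infdist x K"
  have d_le: "d \<le> norm (x - k)" if "k \<in> K" for k
    using infdist_le[OF that, of x] by (simp add: d_def dist_norm)
  have "0 \<le> d" by (simp add: d_def infdist_nonneg)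
  have "\<exists>k\<in>K. norm (x - k) < d + inverse (real (Suc n))" for n
  proof -
    have "(INF a\<in>K. dist x a) < d + inverse (real (Suc n))"
      using assms(3) by (simp add: d_def infdist_def)
    moreover have "bdd_below (dist x ` K)" by (rule bdd_belowI2[where m=0]) simp
    ultimately show ?thesis using cINF_less_iff[of K "dist x"] assms(3) by (auto simp: dist_norm)
  qed
  then obtain k where kK: "\<And>n. k n \<in> K" and kd: "\<And>n. norm (x - k n) < d + inverse (real (Suc n))"
    by metis
  obtain p where kp: "k \<longlonglongrightarrow> p"
    using minimizing_sequence_Cauchy[OF assms(2) kK \<open>0 \<le> d\<close> d_le kd]
    by (auto simp: Cauchy_convergent_iff convergent_def)
  have "p \<in> K" using closed_sequentially[OF assms(1) kK kp] .
  moreover have "norm (x - p) \<le> d"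
  proof (rule LIMSEQ_le)
    show "(\<lambda>n. norm (x - k n)) \<longlonglongrightarrow> norm (x - p)" by (intro tendsto_intros kp)
    show "(\<lambda>n. d + inverse (real (Suc n))) \<longlonglongrightarrow> d" by (rule LIMSEQ_inverse_real_of_nat_add)
    show "\<exists>N. \<forall>n\<ge>N. norm (x - k n) \<le> d + inverse (real (Suc n))" using kd less_imp_le by blast
  qed
  ultimately show ?thesis using d_le by force
qed

text \<open>Moving \<open>p\<close> by the step \<open>\<langle>z, x - p\<rangle> / \<parallel>z\<parallel>\<^sup>2\<close> along \<open>z\<close> would decrease \<open>\<parallel>x - p\<parallel>\<^sup>2\<close> by
\<open>|\<langle>z, x - p\<rangle>|\<^sup>2 / \<parallel>z\<parallel>\<^sup>2\<close>.\<close>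

lemma nearest_point_orthogonal:
  fixes x :: "'a::chilbert"
  assumes K: "csubspace K" and "p \<in> K" and p: "\<And>k. k \<in> K \<Longrightarrow> norm (x - p) \<le> norm (x - k)"
    and "z \<in> K"
  shows "cinner z (x - p) = 0"
proof (cases "z = 0")
  case True then show ?thesis by simp
next
  case False
  define w where "w = x - p"
  define a where "a = cinner z w"
  define r where "r = norm z"
  define t where "t = a / complex_of_real (r\<^sup>2)"
  have "r > 0" using False by (simp add: r_def)
  have "p + scaleC t z \<in> K" using K \<open>p \<in> K\<close> \<open>z \<in> K\<close> unfolding csubspace_def by blast
  then have "norm w \<le> norm (w - scaleC t z)"
    using p by (simp add: w_def algebra_simps)
  then have "(norm w)\<^sup>2 \<le> (norm (w - scaleC t z))\<^sup>2"
    by (simp add: power_mono)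
  also have "\<dots> = (norm w)\<^sup>2 - 2 * Re (cinner w (scaleC t z)) + (norm (scaleC t z))\<^sup>2"
    by (rule power2_norm_diff)
  also have "cinner w (scaleC t z) = complex_of_real ((cmod a)\<^sup>2 / r\<^sup>2)"
    using complex_norm_square[of a]
    by (simp add: cinner_scaleC_right a_def cinner_conj[of w z] t_def)
  also have "(norm (scaleC t z))\<^sup>2 = (cmod a)\<^sup>2 / r\<^sup>2"
    using \<open>r > 0\<close> by (simp add: norm_scaleC t_def norm_divide power_mult_distrib r_def[symmetric]
        power2_eq_square norm_mult abs_mult del: of_real_mult)
  finally have "(cmod a)\<^sup>2 / r\<^sup>2 \<le> 0" by simp
  then have "a = 0" using \<open>r > 0\<close> by (simp add: divide_le_0_iff)
  then show ?thesis by (simp add: a_def w_def)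
qed

definition orth_proj :: "'a::chilbert set \<Rightarrow> 'a \<Rightarrow> 'a" where
  "orth_proj K x = (SOME p. p \<in> K \<and> (\<forall>k\<in>K. cinner k (x - p) = 0))"

context
  fixes K :: "'a::chilbert set"
  assumes closed: "closed K" and subspace: "csubspace K"
begin

lemma orth_proj_char: "orth_proj K x \<in> K \<and> (\<forall>k\<in>K. cinner k (x - orth_proj K x) = 0)"
proof -
  have "K \<noteq> {}" using subspace by (auto simp: csubspace_def)
  then obtain p where "p \<in> K" "\<forall>k\<in>K. norm (x - p) \<le> norm (x - k)"
    using nearest_point_exists[OF closed csubspace_convex[OF subspace]] by blast
  then have "p \<in> K \<and> (\<forall>k\<in>K. cinner k (x - p) = 0)"
    using nearest_point_orthogonal[OF subspace] by blast
  then show ?thesis unfolding orth_proj_def by (rule someI)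
qed

lemma orth_proj_in: "orth_proj K x \<in> K"
  using orth_proj_char by blast

lemma orth_proj_orthogonal: "k \<in> K \<Longrightarrow> cinner k (x - orth_proj K x) = 0"
  using orth_proj_char by blast

lemma orth_proj_unique:
  assumes "p \<in> K" "\<And>k. k \<in> K \<Longrightarrow> cinner k (x - p) = 0"
  shows "orth_proj K x = p"
proof -
  let ?q = "orth_proj K x"
  have pq: "p - ?q \<in> K" using csubspace_diff[OF subspace assms(1) orth_proj_in] .
  have "cinner (p - ?q) ((x - ?q) - (x - p)) = 0"
    using assms(2)[OF pq] orth_proj_orthogonal[OF pq] by (simp add: cinner_diff_right)
  then show ?thesis by simp
qed

lemma orth_proj_fixes: "x \<in> K \<Longrightarrow> orth_proj K x = x"
  by (rule orth_proj_unique) auto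

lemma orth_proj_eq_0: "(\<And>k. k \<in> K \<Longrightarrow> cinner k x = 0) \<Longrightarrow> orth_proj K x = 0"
  using subspace by (intro orth_proj_unique) (auto simp: csubspace_def)

lemma orth_proj_add: "orth_proj K (x + y) = orth_proj K x + orth_proj K y"
proof (rule orth_proj_unique)
  show "orth_proj K x + orth_proj K y \<in> K"
    using orth_proj_in subspace unfolding csubspace_def by blast
  fix k assume "k \<in> K"
  have "x + y - (orth_proj K x + orth_proj K y) = (x - orth_proj K x) + (y - orth_proj K y)"
    by (simp add: algebra_simps)
  then show "cinner k (x + y - (orth_proj K x + orth_proj K y)) = 0"
    using orth_proj_orthogonal[OF \<open>k \<in> K\<close>] by (simp only: cinner_add_right) simp
qed

lemma orth_proj_scaleC: "orth_proj K (scaleC c x) = scaleC c (orth_proj K x)"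
proof (rule orth_proj_unique)
  show "scaleC c (orth_proj K x) \<in> K"
    using orth_proj_in subspace unfolding csubspace_def by blast
  fix k assume "k \<in> K"
  then show "cinner k (scaleC c x - scaleC c (orth_proj K x)) = 0"
    using orth_proj_orthogonal by (simp flip: scaleC_diff_right add: cinner_scaleC_right)
qed

lemma norm_orth_proj_le: "norm (orth_proj K x) \<le> norm x"
proof -
  have "cinner (orth_proj K x) (x - orth_proj K x) = 0"
    using orth_proj_orthogonal[OF orth_proj_in] .
  then have "(norm x)\<^sup>2 = (norm (orth_proj K x))\<^sup>2 + (norm (x - orth_proj K x))\<^sup>2"
    using power2_norm_add[of "orth_proj K x" "x - orth_proj K x"] by simp
  then have "(norm (orth_proj K x))\<^sup>2 \<le> (norm x)\<^sup>2" by simp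
  then show ?thesis by (rule power2_le_imp_le) simp
qed

lemma cinner_orth_proj_swap: "cinner (orth_proj K x) y = cinner x (orth_proj K y)"
proof -
  have "cinner (orth_proj K x) (y - orth_proj K y) = 0"
    "cinner (x - orth_proj K x) (orth_proj K y) = 0"
    using orth_proj_orthogonal[OF orth_proj_in] by (auto simp: cinner_eq_0_sym)
  then show ?thesis by (simp add: cinner_diff_right cinner_diff_left)
qed

end

section \<open>Bounded operators and adjoints\<close>

definition selfadjoint :: "('a::chilbert \<Rightarrow> 'a) \<Rightarrow> bool" where
  "selfadjoint T \<longleftrightarrow> (\<forall>x y. cinner (T x) y = cinner x (T y))"

lemma bounded_clinear_opI:
  assumes "bounded_linear T" "\<And>c x. T (scaleC c x) = scaleC c (T x)"
  shows "bounded_clinear_op T"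
  using assms linear_add[OF bounded_linear.linear[OF assms(1)]] bounded_linear.bounded[OF assms(1)]
  unfolding bounded_clinear_op_def by blast

lemma bounded_clinear_op_bounded_linear:
  assumes "bounded_clinear_op T"
  shows "bounded_linear T"
proof -
  from assms obtain K where add: "\<And>x y. T (x + y) = T x + T y"
    and scale: "\<And>c x. T (scaleC c x) = scaleC c (T x)" and bound: "\<And>x. norm (T x) \<le> norm x * K"
    unfolding bounded_clinear_op_def by blast
  show ?thesis
    by (rule bounded_linear_intro[OF add _ bound]) (metis scale scaleC_of_real)
qed

context
  fixes T :: "'a::chilbert \<Rightarrow> 'a"
  assumes T: "bounded_clinear_op T"
begin

lemma bounded_clinear_op_add: "T (x + y) = T x + T y"
  using T unfolding bounded_clinear_op_def by blast

lemma bounded_clinear_op_scaleC: "T (scaleC c x) = scaleC c (T x)"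
  using T unfolding bounded_clinear_op_def by blast

lemma bounded_clinear_op_linear: "linear T"
  using bounded_clinear_op_bounded_linear[OF T] by (rule bounded_linear.linear)

lemma bounded_clinear_op_diff: "T (x - y) = T x - T y"
  using linear_diff[OF bounded_clinear_op_linear] .

lemma bounded_clinear_op_zero: "T 0 = 0"
  using linear_0[OF bounded_clinear_op_linear] .

lemma bounded_clinear_op_scaleR: "T (r *\<^sub>R x) = r *\<^sub>R T x"
  using linear_scale[OF bounded_clinear_op_linear] .

lemma bounded_clinear_op_pos_bound: "\<exists>K>0. \<forall>x. norm (T x) \<le> norm x * K"
  using bounded_linear.pos_bounded[OF bounded_clinear_op_bounded_linear[OF T]] .

end

lemma bounded_clinear_op_comp:
  "bounded_clinear_op A \<Longrightarrow> bounded_clinear_op B \<Longrightarrow> bounded_clinear_op (A \<circ> B)"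
  by (rule bounded_clinear_opI)
    (auto simp: comp_def bounded_clinear_op_scaleC intro: bounded_linear_compose bounded_clinear_op_bounded_linear)

lemma bounded_clinear_op_id: "bounded_clinear_op id"
  by (rule bounded_clinear_opI) (auto simp: bounded_linear_ident[unfolded id_def[symmetric]])

lemma bounded_clinear_op_plus:
  "bounded_clinear_op A \<Longrightarrow> bounded_clinear_op B \<Longrightarrow> bounded_clinear_op (\<lambda>x. A x + B x)"
  by (rule bounded_clinear_opI)
    (auto simp: bounded_clinear_op_scaleC scaleC_add_right
      intro: bounded_linear_add bounded_clinear_op_bounded_linear)

lemma bounded_clinear_op_minus:
  "bounded_clinear_op A \<Longrightarrow> bounded_clinear_op B \<Longrightarrow> bounded_clinear_op (\<lambda>x. A x - B x)"
  by (rule bounded_clinear_opI)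
    (auto simp: bounded_clinear_op_scaleC scaleC_diff_right
      intro: bounded_linear_sub bounded_clinear_op_bounded_linear)

lemma bounded_clinear_op_scaleC_left:
  "bounded_clinear_op A \<Longrightarrow> bounded_clinear_op (\<lambda>x. scaleC c (A x))"
  by (rule bounded_clinear_opI)
    (auto simp: bounded_clinear_op_scaleC scaleC_scaleC mult.commute
      intro: bounded_linear_compose[OF bounded_linear_scaleC] bounded_clinear_op_bounded_linear)

lemma bounded_clinear_op_scaleR_left:
  "bounded_clinear_op A \<Longrightarrow> bounded_clinear_op (\<lambda>x. r *\<^sub>R A x)"
  using bounded_clinear_op_scaleC_left[of A "of_real r"] by (simp add: scaleC_of_real)

lemma bounded_clinear_op_orth_proj:
  "closed K \<Longrightarrow> csubspace K \<Longrightarrow> bounded_clinear_op (orth_proj K)"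
  unfolding bounded_clinear_op_def
  using orth_proj_add orth_proj_scaleC norm_orth_proj_le by (metis mult.right_neutral)

text \<open>Riesz: the vector representing a nonzero functional is read off from any \<open>z \<noteq> 0\<close>
orthogonal to its kernel.\<close>

lemma riesz_representation:
  fixes f :: "'a::chilbert \<Rightarrow> complex"
  assumes add: "\<And>x y. f (x + y) = f x + f y" and scale: "\<And>c x. f (scaleC c x) = c * f x"
    and bound: "\<And>x. cmod (f x) \<le> norm x * B"
  shows "\<exists>w. \<forall>x. f x = cinner w x"
proof (cases "\<forall>x. f x = 0")
  case True then show ?thesis by (intro exI[of _ 0]) simp
next
  case False
  have "bounded_linear f"
    by (rule bounded_linear_intro[OF add _ bound])
      (metis scale scaleC_of_real scaleR_conv_of_real)
  then have lin: "linear f" by (rule bounded_linear.linear)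
  define N where "N = {x. f x = 0}"
  have "closed N" unfolding N_def
    by (intro closed_Collect_eq continuous_on_const linear_continuous_on \<open>bounded_linear f\<close>)
  moreover have "csubspace N" unfolding csubspace_def N_def by (auto simp: add scale linear_0[OF lin])
  moreover obtain x0 where "f x0 \<noteq> 0" using False by blast
  ultimately obtain z where fz: "f z \<noteq> 0" and z_orth: "\<And>k. f k = 0 \<Longrightarrow> cinner k z = 0"
    by (metis (mono_tags) N_def orth_proj_in orth_proj_orthogonal linear_diff[OF lin]
        mem_Collect_eq diff_zero)
  have "z \<noteq> 0" using fz linear_0[OF lin] by auto
  have "f y = cinner (scaleC (cnj (f z / cinner z z)) z) y" for y
  proof -
    have "f (scaleC (f y) z - scaleC (f z) y) = 0" by (simp add: linear_diff[OF lin] scale)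
    then have "cinner z (scaleC (f y) z - scaleC (f z) y) = 0"
      using z_orth cinner_eq_0_sym by blast
    then have "f y * cinner z z = f z * cinner z y"
      by (simp add: cinner_diff_right cinner_scaleC_right)
    then show ?thesis using \<open>z \<noteq> 0\<close> by (simp add: cinner_scaleC_left field_simps)
  qed
  then show ?thesis by blast
qed

lemma adj_eqI:
  assumes "\<And>x y. cinner (T x) y = cinner x (S y)"
  shows "adj T = S"
  unfolding adj_def
proof (rule the_equality)
  show "\<forall>x y. cinner (T x) y = cinner x (S y)" using assms by blast
  fix S' assume "\<forall>x y. cinner (T x) y = cinner x (S' y)"
  with assms show "S' = S" by (metis ext cinner_extensionality)
qed

lemma cinner_adj_right:
  assumes T: "bounded_clinear_op T"
  shows "cinner (T x) y = cinner x (adj T y)"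
proof -
  obtain K where K: "\<And>x. norm (T x) \<le> norm x * K"
    using T unfolding bounded_clinear_op_def by blast
  have "\<exists>w. \<forall>x. cinner y (T x) = cinner w x" for y
  proof (rule riesz_representation)
    show "cinner y (T (a + b)) = cinner y (T a) + cinner y (T b)" for a b
      by (simp add: bounded_clinear_op_add[OF T] cinner_add_right)
    show "cinner y (T (scaleC c a)) = c * cinner y (T a)" for c a
      by (simp add: bounded_clinear_op_scaleC[OF T] cinner_scaleC_right)
    show "cmod (cinner y (T a)) \<le> norm a * (norm y * K)" for a
      using norm_cinner_le[of y "T a"] mult_left_mono[OF K[of a], of "norm y"]
      by (simp add: algebra_simps)
  qed
  then obtain S where S: "\<And>y x. cinner y (T x) = cinner (S y) x" by metis
  then have "cinner (T x) y = cinner x (S y)" for x y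
    by (metis cinner_conj)
  then show ?thesis by (metis adj_eqI)
qed

lemma cinner_adj_left:
  "bounded_clinear_op T \<Longrightarrow> cinner (adj T x) y = cinner x (T y)"
  by (metis cinner_adj_right cinner_conj)

lemma bounded_clinear_op_adj:
  assumes T: "bounded_clinear_op T"
  shows "bounded_clinear_op (adj T)"
proof -
  let ?S = "adj T"
  obtain K where "K > 0" and K: "\<And>x. norm (T x) \<le> norm x * K"
    using bounded_clinear_op_pos_bound[OF T] by blast
  have "?S (x + y) = ?S x + ?S y" for x y
    by (rule cinner_extensionality) (simp add: cinner_adj_right[OF T, symmetric] cinner_add_right)
  moreover have "?S (scaleC c x) = scaleC c (?S x)" for c x
    by (rule cinner_extensionality) (simp add: cinner_adj_right[OF T, symmetric] cinner_scaleC_right)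
  moreover have "norm (?S y) \<le> norm y * K" for y
  proof -
    have "(norm (?S y))\<^sup>2 = Re (cinner (T (?S y)) y)"
      by (simp add: cinner_adj_right[OF T] cinner_self_norm del: of_real_power)
    also have "\<dots> \<le> norm (T (?S y)) * norm y"
      using complex_Re_le_cmod norm_cinner_le order_trans by blast
    also have "\<dots> \<le> norm (?S y) * K * norm y" by (intro mult_right_mono K) simp
    finally have "norm (?S y) * norm (?S y) \<le> norm (?S y) * (norm y * K)"
      by (simp add: power2_eq_square algebra_simps)
    then show ?thesis using \<open>K > 0\<close> by (cases "?S y = 0") auto
  qed
  ultimately show ?thesis unfolding bounded_clinear_op_def by blast
qed

lemma projection_op_orth_proj:
  assumes "closed K" "csubspace K"
  shows "projection_op (orth_proj K)"
  unfolding projection_op_def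
proof (intro conjI bounded_clinear_op_orth_proj[OF assms])
  show "adj (orth_proj K) = orth_proj K"
    by (rule adj_eqI) (rule cinner_orth_proj_swap[OF assms])
  show "orth_proj K \<circ> orth_proj K = orth_proj K"
    using orth_proj_fixes[OF assms orth_proj_in[OF assms]] by auto
qed

section \<open>The square root of \<open>I - X\<close> for a self-adjoint contraction \<open>X\<close>\<close>

text \<open>The Taylor coefficients of \<open>\<surd>(1 - t)\<close>.\<close>

definition sqrt_coeff :: "nat \<Rightarrow> real" where
  "sqrt_coeff n = (-1) ^ n * ((1/2::real) gchoose n)"

lemma gbinomial_Suc_rec: "((a::real) gchoose Suc k) = (a gchoose k) * (a - of_nat k) / of_nat (Suc k)"
proof -
  have "(a gchoose Suc k) * fact (Suc k) = (\<Prod>i = 0..<Suc k. a - of_nat i)"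
    by (rule gbinomial_mult_fact')
  also have "\<dots> = (\<Prod>i = 0..<k. a - of_nat i) * (a - of_nat k)"
    by simp
  also have "(\<Prod>i = 0..<k. a - of_nat i) = (a gchoose k) * fact k"
    by (rule gbinomial_mult_fact'[symmetric])
  finally have "(a gchoose Suc k) * fact (Suc k) = (a gchoose k) * fact k * (a - of_nat k)" .
  then have "((a gchoose Suc k) * of_nat (Suc k)) * fact k = ((a gchoose k) * (a - of_nat k)) * fact k"
    by (simp only: fact_Suc) (simp add: algebra_simps)
  then show ?thesis
    by (simp add: eq_divide_eq del: of_nat_Suc)
qed

lemma sqrt_coeff_0 [simp]: "sqrt_coeff 0 = 1"
  by (simp add: sqrt_coeff_def)

lemma sqrt_coeff_Suc: "sqrt_coeff (Suc n) = sqrt_coeff n * ((real n - 1/2) / real (Suc n))"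
  by (simp add: sqrt_coeff_def gbinomial_Suc_rec field_simps del: of_nat_Suc)

lemma sqrt_coeff_Suc_neg: "sqrt_coeff (Suc n) < 0"
proof (induction n)
  case 0 then show ?case by (simp add: sqrt_coeff_def)
next
  case (Suc n)
  have "(real (Suc n) - 1/2) / real (Suc (Suc n)) > 0" by simp
  then show ?case using Suc sqrt_coeff_Suc[of "Suc n"] by (metis mult_neg_pos)
qed

lemma sum_sqrt_coeff_nonneg: "(\<Sum>k\<le>m. sqrt_coeff k) \<ge> 0"
proof -
  have "(\<Sum>k\<le>m. sqrt_coeff k) = (-1) ^ m * ((-1/2::real) gchoose m)"
    using gbinomial_sum_lower_neg[of "1/2::real" m] by (simp add: sqrt_coeff_def mult.commute)
  also have "\<dots> > 0"
  proof (induction m)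
    case 0 then show ?case by simp
  next
    case (Suc m)
    have "(-1) ^ Suc m * ((-1/2::real) gchoose Suc m)
        = ((-1) ^ m * ((-1/2::real) gchoose m)) * ((real m + 1/2) / real (Suc m))"
      by (simp add: gbinomial_Suc_rec field_simps del: of_nat_Suc)
    also have "\<dots> > 0" using Suc by (simp del: of_nat_Suc)
    finally show ?case .
  qed
  finally show ?thesis by simp
qed

text \<open>All coefficients but the first are negative, so \<open>\<Sum>|c\<^sub>k| = 2 - \<Sum>c\<^sub>k \<le> 2\<close>.\<close>

lemma sum_abs_sqrt_coeff_le: "(\<Sum>k\<le>m. \<bar>sqrt_coeff k\<bar>) \<le> 2"
proof -
  have "(\<Sum>k\<le>m. \<bar>sqrt_coeff k\<bar>) + (\<Sum>k\<le>m. sqrt_coeff k) = 2"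
  proof (induction m)
    case (Suc m)
    then show ?case using sqrt_coeff_Suc_neg[of m] by simp
  qed simp
  then show ?thesis using sum_sqrt_coeff_nonneg[of m] by linarith
qed

lemma summable_abs_sqrt_coeff: "summable (\<lambda>n. \<bar>sqrt_coeff n\<bar>)"
proof (rule summableI_nonneg_bounded)
  show "(\<Sum>i<n. \<bar>sqrt_coeff i\<bar>) \<le> 2" for n
    using sum_mono2[of "{..n}" "{..<n}" "\<lambda>i. \<bar>sqrt_coeff i\<bar>"] sum_abs_sqrt_coeff_le[of n]
    by fastforce
qed simp

lemma sum_abs_sqrt_coeff_lessThan_le: "(\<Sum>k<m. \<bar>sqrt_coeff k\<bar>) \<le> 2"
  using sum_mono2[of "{..m}" "{..<m}" "\<lambda>i. \<bar>sqrt_coeff i\<bar>"] sum_abs_sqrt_coeff_le[of m]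
  by fastforce

lemma sqrt_coeff_convolution:
  "(\<Sum>i\<le>k. sqrt_coeff i * sqrt_coeff (k - i)) = (if k = 0 then 1 else if k = 1 then -1 else 0)"
proof -
  have "sqrt_coeff i * sqrt_coeff (k - i) = (-1) ^ k * (((1/2::real) gchoose i) * ((1/2) gchoose (k - i)))"
    if "i \<le> k" for i
  proof -
    have "(-1::real) ^ i * (-1) ^ (k - i) = (-1) ^ k"
      using that by (simp add: power_add[symmetric])
    then show ?thesis by (simp add: sqrt_coeff_def algebra_simps)
  qed
  then have "(\<Sum>i\<le>k. sqrt_coeff i * sqrt_coeff (k - i))
      = (-1) ^ k * (\<Sum>i\<in>{0..k}. ((1/2::real) gchoose i) * ((1/2) gchoose (k - i)))"
    by (simp add: sum_distrib_left atLeast0AtMost)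
  also have "\<dots> = (-1) ^ k * of_nat (1 choose k)"
    using gbinomial_Vandermonde[of "1/2::real" "1/2" k] binomial_gbinomial[of 1 k, where 'a=real]
    by simp
  finally show ?thesis
    by (cases k) (auto simp: binomial_eq_0)
qed

lemma off_triangle_sum_tendsto_0:
  fixes a :: "nat \<Rightarrow> real"
  assumes "summable (\<lambda>n. \<bar>a n\<bar>)"
  shows "(\<lambda>N. \<Sum>(i,j)\<in>{..<N}\<times>{..<N} - {(i,j). i + j < N}. \<bar>a i\<bar> * \<bar>a j\<bar>) \<longlonglongrightarrow> 0"
proof -
  define S where "S = (\<Sum>n. \<bar>a n\<bar>)"
  have "(\<Sum>(i,j)\<in>{..<N}\<times>{..<N} - {(i,j). i + j < N}. \<bar>a i\<bar> * \<bar>a j\<bar>)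
      = (\<Sum>i<N. \<bar>a i\<bar>) * (\<Sum>i<N. \<bar>a i\<bar>) - (\<Sum>k<N. \<Sum>i\<le>k. \<bar>a i\<bar> * \<bar>a (k - i)\<bar>)" for N
  proof -
    have "{(i,j). i + j < N} \<subseteq> {..<N}\<times>{..<N}" by auto
    then show ?thesis
      by (simp add: sum.subset_diff[of _ "{..<N}\<times>{..<N}"] sum.triangle_reindex
          sum_product sum.cartesian_product)
  qed
  moreover have "(\<lambda>N. (\<Sum>i<N. \<bar>a i\<bar>) * (\<Sum>i<N. \<bar>a i\<bar>)) \<longlonglongrightarrow> S * S"
    unfolding S_def by (intro tendsto_mult summable_LIMSEQ assms)
  moreover have "(\<lambda>N. \<Sum>k<N. \<Sum>i\<le>k. \<bar>a i\<bar> * \<bar>a (k - i)\<bar>) \<longlonglongrightarrow> S * S"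
    using Cauchy_product_sums[of "\<lambda>n. \<bar>a n\<bar>" "\<lambda>n. \<bar>a n\<bar>"] assms
    by (simp add: S_def sums_def)
  ultimately show ?thesis
    using tendsto_diff[of _ "S * S" _ _ "S * S"] by simp
qed

lemma bounded_clinear_op_funpow: "bounded_clinear_op T \<Longrightarrow> bounded_clinear_op (T ^^ n)"
  by (induction n) (simp_all add: bounded_clinear_op_id bounded_clinear_op_comp)

lemma selfadjoint_funpow: "selfadjoint T \<Longrightarrow> selfadjoint (T ^^ n)"
  unfolding selfadjoint_def by (induction n) (simp_all add: funpow_swap1)

lemma funpow_commute: "(\<And>v. B (T v) = T (B v)) \<Longrightarrow> B ((T ^^ n) v) = (T ^^ n) (B v)"
  by (induction n) simp_all

locale selfadjoint_contraction =
  fixes X :: "'a::chilbert \<Rightarrow> 'a"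
  assumes bounded: "bounded_clinear_op X"
    and selfadjoint: "selfadjoint X"
    and contraction: "\<And>v. norm (X v) \<le> norm v"
begin

lemma bounded_linear_funpow: "bounded_linear (X ^^ n)"
  using bounded_clinear_op_bounded_linear[OF bounded_clinear_op_funpow[OF bounded]] .

lemma norm_funpow_le: "norm ((X ^^ n) v) \<le> norm v"
  by (induction n) (auto intro: order_trans[OF contraction])

definition sqrt_partial :: "nat \<Rightarrow> 'a \<Rightarrow> 'a" where
  "sqrt_partial N v = (\<Sum>n<N. sqrt_coeff n *\<^sub>R (X ^^ n) v)"

definition sqrt_id_minus :: "'a \<Rightarrow> 'a" where
  "sqrt_id_minus v = (\<Sum>n. sqrt_coeff n *\<^sub>R (X ^^ n) v)"

lemma norm_sqrt_term_le: "norm (sqrt_coeff n *\<^sub>R (X ^^ n) v) \<le> \<bar>sqrt_coeff n\<bar> * norm v"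
  by (simp add: mult_left_mono norm_funpow_le)

lemma summable_norm_sqrt_term: "summable (\<lambda>n. norm (sqrt_coeff n *\<^sub>R (X ^^ n) v))"
proof (rule summable_comparison_test[where g="\<lambda>n. \<bar>sqrt_coeff n\<bar> * norm v"])
  show "\<exists>N. \<forall>n\<ge>N. norm (norm (sqrt_coeff n *\<^sub>R (X ^^ n) v)) \<le> \<bar>sqrt_coeff n\<bar> * norm v"
    using norm_sqrt_term_le by auto
  show "summable (\<lambda>n. \<bar>sqrt_coeff n\<bar> * norm v)"
    by (intro summable_mult2 summable_abs_sqrt_coeff)
qed

lemma summable_sqrt_term: "summable (\<lambda>n. sqrt_coeff n *\<^sub>R (X ^^ n) v)"
  using summable_norm_cancel[OF summable_norm_sqrt_term] .

lemma sqrt_partial_tendsto: "(\<lambda>N. sqrt_partial N v) \<longlonglongrightarrow> sqrt_id_minus v"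
  unfolding sqrt_partial_def sqrt_id_minus_def by (rule summable_LIMSEQ[OF summable_sqrt_term])

lemma sqrt_partial_diff: "sqrt_partial N (v - w) = sqrt_partial N v - sqrt_partial N w"
  unfolding sqrt_partial_def
  by (simp add: linear_diff[OF bounded_linear.linear[OF bounded_linear_funpow]] scaleR_diff_right
      sum_subtractf)

lemma norm_sqrt_partial_le: "norm (sqrt_partial N w) \<le> 2 * norm w"
proof -
  have "norm (sqrt_partial N w) \<le> (\<Sum>n<N. \<bar>sqrt_coeff n\<bar> * norm w)"
    unfolding sqrt_partial_def by (rule order_trans[OF norm_sum sum_mono[OF norm_sqrt_term_le]])
  also have "\<dots> = (\<Sum>n<N. \<bar>sqrt_coeff n\<bar>) * norm w"
    by (rule sum_distrib_right[symmetric])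
  also have "\<dots> \<le> 2 * norm w"
    by (intro mult_right_mono sum_abs_sqrt_coeff_lessThan_le) simp
  finally show ?thesis .
qed

lemma norm_sqrt_id_minus_le: "norm (sqrt_id_minus v) \<le> 2 * norm v"
  by (rule LIMSEQ_le_const2[OF tendsto_norm[OF sqrt_partial_tendsto]]) (simp add: norm_sqrt_partial_le)

lemma sqrt_id_minus_commute:
  assumes bl: "bounded_linear B" and comm: "\<And>v. B (X v) = X (B v)"
  shows "B (sqrt_id_minus v) = sqrt_id_minus (B v)"
proof -
  have "B (sqrt_id_minus v) = (\<Sum>n. B (sqrt_coeff n *\<^sub>R (X ^^ n) v))"
    unfolding sqrt_id_minus_def by (rule bounded_linear.suminf[OF bl summable_sqrt_term])
  also have "\<dots> = sqrt_id_minus (B v)"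
    unfolding sqrt_id_minus_def
    by (simp add: linear_scale[OF bounded_linear.linear[OF bl]] funpow_commute[where B=B and T=X, OF comm])
  finally show ?thesis .
qed

lemma bounded_clinear_op_sqrt_id_minus: "bounded_clinear_op sqrt_id_minus"
proof -
  have "sqrt_id_minus (v + w) = sqrt_id_minus v + sqrt_id_minus w" for v w
    unfolding sqrt_id_minus_def
    by (simp add: suminf_add[OF summable_sqrt_term summable_sqrt_term] scaleR_add_right
        linear_add[OF bounded_linear.linear[OF bounded_linear_funpow]])
  moreover have "sqrt_id_minus (scaleC c v) = scaleC c (sqrt_id_minus v)" for c v
    using sqrt_id_minus_commute[OF bounded_linear_scaleC, of c]
      bounded_clinear_op_scaleC[OF bounded] by metis
  ultimately show ?thesis
    unfolding bounded_clinear_op_def using norm_sqrt_id_minus_le by (metis mult.commute)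
qed

lemma selfadjoint_sqrt_id_minus: "selfadjoint sqrt_id_minus"
  unfolding selfadjoint_def
proof (intro allI)
  fix x y
  have "cinner (sqrt_id_minus x) y = (\<Sum>n. cinner (sqrt_coeff n *\<^sub>R (X ^^ n) x) y)"
    unfolding sqrt_id_minus_def
    by (rule bounded_linear.suminf[OF bounded_linear_cinner_left summable_sqrt_term])
  also have "\<dots> = (\<Sum>n. cinner x (sqrt_coeff n *\<^sub>R (X ^^ n) y))"
    using selfadjoint_funpow[OF selfadjoint, unfolded selfadjoint_def]
    by (simp only: cinner_scaleR_left cinner_scaleR_right)
  also have "\<dots> = cinner x (sqrt_id_minus y)"
    unfolding sqrt_id_minus_def
    by (rule bounded_linear.suminf[OF bounded_linear_cinner_right summable_sqrt_term, symmetric])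
  finally show "cinner (sqrt_id_minus x) y = cinner x (sqrt_id_minus y)" .
qed

lemma sqrt_partial_sq_tendsto: "(\<lambda>N. sqrt_partial N (sqrt_partial N v)) \<longlonglongrightarrow> sqrt_id_minus (sqrt_id_minus v)"
proof (rule LIM_zero_cancel, rule Lim_null_comparison)
  let ?R = sqrt_id_minus and ?p = sqrt_partial
  let ?g = "\<lambda>N. 2 * norm (?p N v - ?R v) + norm (?p N (?R v) - ?R (?R v))"
  have "norm (?p N (?p N v) - ?R (?R v)) \<le> ?g N" for N
  proof -
    have "?p N (?p N v) - ?R (?R v) = ?p N (?p N v - ?R v) + (?p N (?R v) - ?R (?R v))"
      by (simp add: sqrt_partial_diff)
    then have "norm (?p N (?p N v) - ?R (?R v))
        \<le> norm (?p N (?p N v - ?R v)) + norm (?p N (?R v) - ?R (?R v))"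
      by (simp only: norm_triangle_ineq)
    then show ?thesis
      using norm_sqrt_partial_le[of N "?p N v - ?R v"] by simp
  qed
  then show "\<forall>\<^sub>F N in sequentially. norm (?p N (?p N v) - ?R (?R v)) \<le> ?g N"
    by simp
  have "(\<lambda>N. norm (?p N w - ?R w)) \<longlonglongrightarrow> 0" for w
    by (rule tendsto_norm_zero[OF LIM_zero[OF sqrt_partial_tendsto]])
  from tendsto_add[OF tendsto_mult[OF tendsto_const this] this]
  show "?g \<longlonglongrightarrow> 0" by simp
qed

lemma sqrt_partial_sq_expand:
  "sqrt_partial N (sqrt_partial N v)
    = (\<Sum>(i,j)\<in>{..<N}\<times>{..<N}. (sqrt_coeff i * sqrt_coeff j) *\<^sub>R (X ^^ (i + j)) v)"
proof -
  have "(X ^^ i) (\<Sum>j<N. sqrt_coeff j *\<^sub>R (X ^^ j) v) = (\<Sum>j<N. sqrt_coeff j *\<^sub>R (X ^^ (i + j)) v)"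
    for i
    by (simp add: linear_sum[OF bounded_linear.linear[OF bounded_linear_funpow]]
        linear_scale[OF bounded_linear.linear[OF bounded_linear_funpow]] funpow_add)
  then show ?thesis
    by (simp add: sqrt_partial_def scaleR_sum_right sum.cartesian_product)
qed

lemma sqrt_partial_sq_triangle:
  assumes "N \<ge> 2"
  shows "(\<Sum>(i,j)\<in>{(i,j). i + j < N}. (sqrt_coeff i * sqrt_coeff j) *\<^sub>R (X ^^ (i + j)) v) = v - X v"
proof -
  have "(\<Sum>(i,j)\<in>{(i,j). i + j < N}. (sqrt_coeff i * sqrt_coeff j) *\<^sub>R (X ^^ (i + j)) v)
      = (\<Sum>k<N. (\<Sum>i\<le>k. sqrt_coeff i * sqrt_coeff (k - i)) *\<^sub>R (X ^^ k) v)"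
    by (simp add: sum.triangle_reindex scaleR_sum_left)
  also have "\<dots> = (\<Sum>k<2. (\<Sum>i\<le>k. sqrt_coeff i * sqrt_coeff (k - i)) *\<^sub>R (X ^^ k) v)"
    using assms by (intro sum.mono_neutral_right) (auto simp: sqrt_coeff_convolution)
  also have "\<dots> = v - X v"
    by (simp add: numeral_2_eq_2 sqrt_coeff_convolution)
  finally show ?thesis .
qed

lemma sqrt_partial_sq_tendsto_id_minus: "(\<lambda>N. sqrt_partial N (sqrt_partial N v)) \<longlonglongrightarrow> v - X v"
proof (rule LIM_zero_cancel, rule Lim_null_comparison)
  define D where "D N = {..<N}\<times>{..<N} - {(i,j). i + j < N}" for N :: nat
  let ?g = "\<lambda>(i,j). (sqrt_coeff i * sqrt_coeff j) *\<^sub>R (X ^^ (i + j)) v"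
  let ?T = "\<lambda>N. \<Sum>(i,j)\<in>D N. \<bar>sqrt_coeff i\<bar> * \<bar>sqrt_coeff j\<bar>"
  have "norm (sqrt_partial N (sqrt_partial N v) - (v - X v)) \<le> ?T N * norm v" if "N \<ge> 2" for N
  proof -
    have "{(i,j). i + j < N} \<subseteq> {..<N}\<times>{..<N}" by auto
    then have "sqrt_partial N (sqrt_partial N v) - (v - X v) = sum ?g (D N)"
      unfolding sqrt_partial_sq_expand D_def sqrt_partial_sq_triangle[OF that, symmetric]
      by (simp add: sum.subset_diff[of _ "{..<N}\<times>{..<N}"])
    also have "norm \<dots> \<le> (\<Sum>(i,j)\<in>D N. \<bar>sqrt_coeff i\<bar> * \<bar>sqrt_coeff j\<bar> * norm v)"
      by (rule order_trans[OF norm_sum sum_mono])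
        (auto simp: abs_mult intro!: mult_left_mono norm_funpow_le)
    finally show ?thesis by (simp add: sum_distrib_right case_prod_unfold)
  qed
  then show "\<forall>\<^sub>F N in sequentially. norm (sqrt_partial N (sqrt_partial N v) - (v - X v)) \<le> ?T N * norm v"
    unfolding eventually_sequentially by blast
  show "(\<lambda>N. ?T N * norm v) \<longlonglongrightarrow> 0"
    using tendsto_mult_left_zero[OF off_triangle_sum_tendsto_0[OF summable_abs_sqrt_coeff]]
    by (simp add: D_def)
qed

lemma sqrt_id_minus_sq: "sqrt_id_minus (sqrt_id_minus v) = v - X v"
  using LIMSEQ_unique[OF sqrt_partial_sq_tendsto sqrt_partial_sq_tendsto_id_minus] .

end

section \<open>Absolute value and positive part of a self-adjoint operator\<close>

definition op_bound :: "('a::chilbert \<Rightarrow> 'a) \<Rightarrow> real" where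
  "op_bound T = (SOME K. K > 0 \<and> (\<forall>x. norm (T x) \<le> norm x * K))"

lemma op_bound:
  assumes "bounded_clinear_op T"
  shows "op_bound T > 0" "norm (T x) \<le> norm x * op_bound T"
  using someI_ex[OF bounded_clinear_op_pos_bound[OF assms]] unfolding op_bound_def by blast+

locale selfadjoint_operator =
  fixes A :: "'a::chilbert \<Rightarrow> 'a"
  assumes bounded: "bounded_clinear_op A"
    and selfadjoint: "selfadjoint A"
begin

lemma cinner_A: "cinner (A x) y = cinner x (A y)"
  using selfadjoint unfolding selfadjoint_def by blast

definition sq_complement :: "'a \<Rightarrow> 'a" where
  "sq_complement v = v - (1 / (op_bound A)\<^sup>2) *\<^sub>R A (A v)"

lemma bounded_clinear_op_sq_complement: "bounded_clinear_op sq_complement"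
  unfolding sq_complement_def[abs_def]
  by (rule bounded_clinear_op_minus[OF bounded_clinear_op_id[unfolded id_def]
        bounded_clinear_op_scaleR_left[OF bounded_clinear_op_comp[OF bounded bounded, unfolded comp_def]]])

lemma selfadjoint_sq_complement: "selfadjoint sq_complement"
  unfolding selfadjoint_def sq_complement_def
  by (simp add: cinner_diff_left cinner_diff_right cinner_scaleR_left cinner_scaleR_right cinner_A)

text \<open>Expanding \<open>\<parallel>v - c A\<^sup>2v\<parallel>\<^sup>2\<close> with \<open>c = 1/K\<^sup>2\<close>, \<open>K\<close> a bound for \<open>A\<close>: the cross term
\<open>2c\<parallel>Av\<parallel>\<^sup>2\<close> dominates \<open>c\<^sup>2\<parallel>A\<^sup>2v\<parallel>\<^sup>2\<close>.\<close>

lemma norm_sq_complement_le: "norm (sq_complement v) \<le> norm v"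
proof -
  define K where "K = op_bound A"
  define c where "c = 1 / K\<^sup>2"
  have "K > 0" and K: "\<And>x. norm (A x) \<le> norm x * K"
    using op_bound[OF bounded] by (auto simp: K_def)
  then have "c > 0" by (simp add: c_def)
  have "cinner v (A (A v)) = cinner (A v) (A v)" by (rule cinner_A[symmetric])
  then have cross: "cinner v (c *\<^sub>R A (A v)) = of_real (c * (norm (A v))\<^sup>2)"
    by (simp add: cinner_scaleR_right cinner_self_norm)
  have "(norm (c *\<^sub>R A (A v)))\<^sup>2 = c\<^sup>2 * (norm (A (A v)))\<^sup>2"
    using \<open>c > 0\<close> by (simp add: power_mult_distrib)
  also have "\<dots> \<le> c\<^sup>2 * (norm (A v) * K)\<^sup>2"
    by (intro mult_left_mono power_mono K) simp_all
  also have "\<dots> = c * (norm (A v))\<^sup>2"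
    using \<open>K > 0\<close> by (simp add: c_def power_mult_distrib power2_eq_square field_simps)
  finally have "(norm (c *\<^sub>R A (A v)))\<^sup>2 \<le> c * (norm (A v))\<^sup>2" .
  moreover have "(norm (sq_complement v))\<^sup>2
      = (norm v)\<^sup>2 - 2 * Re (cinner v (c *\<^sub>R A (A v))) + (norm (c *\<^sub>R A (A v)))\<^sup>2"
    unfolding sq_complement_def c_def K_def by (rule power2_norm_diff)
  ultimately have "(norm (sq_complement v))\<^sup>2 \<le> (norm v)\<^sup>2 - c * (norm (A v))\<^sup>2"
    using cross by simp
  also have "\<dots> \<le> (norm v)\<^sup>2" using \<open>c > 0\<close> by simp
  finally show ?thesis by (rule power2_le_imp_le) simp
qed

sublocale sq: selfadjoint_contraction sq_complement
  by unfold_locales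
    (simp_all add: bounded_clinear_op_sq_complement selfadjoint_sq_complement norm_sq_complement_le)

text \<open>\<open>|A| = \<parallel>A\<parallel> \<surd>(I - A\<^sup>2/\<parallel>A\<parallel>\<^sup>2)\<close>, with any norm bound in place of \<open>\<parallel>A\<parallel>\<close>.\<close>

definition abs_op :: "'a \<Rightarrow> 'a" where
  "abs_op v = op_bound A *\<^sub>R sq.sqrt_id_minus v"

lemma bounded_clinear_op_abs_op: "bounded_clinear_op abs_op"
  unfolding abs_op_def[abs_def]
  by (rule bounded_clinear_op_scaleR_left[OF sq.bounded_clinear_op_sqrt_id_minus])

lemma selfadjoint_abs_op: "selfadjoint abs_op"
  using sq.selfadjoint_sqrt_id_minus
  by (simp add: selfadjoint_def abs_op_def cinner_scaleR_left cinner_scaleR_right)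

lemma abs_op_commute:
  assumes bl: "bounded_linear B" and comm: "\<And>v. B (A (A v)) = A (A (B v))"
  shows "B (abs_op v) = abs_op (B v)"
proof -
  have "B (sq_complement v) = sq_complement (B v)" for v
    by (simp add: sq_complement_def linear_diff[OF bounded_linear.linear[OF bl]]
        linear_scale[OF bounded_linear.linear[OF bl]] comm)
  then show ?thesis
    by (simp add: abs_op_def linear_scale[OF bounded_linear.linear[OF bl]] sq.sqrt_id_minus_commute[OF bl])
qed

lemma abs_op_sq: "abs_op (abs_op v) = A (A v)"
proof -
  have "abs_op (abs_op v) = (op_bound A)\<^sup>2 *\<^sub>R sq.sqrt_id_minus (sq.sqrt_id_minus v)"
    by (simp add: abs_op_def bounded_clinear_op_scaleR[OF sq.bounded_clinear_op_sqrt_id_minus]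
        power2_eq_square)
  also have "\<dots> = A (A v)"
    using op_bound(1)[OF bounded] by (simp add: sq.sqrt_id_minus_sq sq_complement_def)
  finally show ?thesis .
qed

lemma abs_op_A: "abs_op (A v) = A (abs_op v)"
  by (rule abs_op_commute[OF bounded_clinear_op_bounded_linear[OF bounded], symmetric]) simp

definition pos_part :: "'a \<Rightarrow> 'a" where
  "pos_part v = (1/2::real) *\<^sub>R (abs_op v + A v)"

definition neg_part :: "'a \<Rightarrow> 'a" where
  "neg_part v = (1/2::real) *\<^sub>R (abs_op v - A v)"

lemma bounded_clinear_op_neg_part: "bounded_clinear_op neg_part"
  unfolding neg_part_def[abs_def]
  by (rule bounded_clinear_op_scaleR_left[OF bounded_clinear_op_minus[OF bounded_clinear_op_abs_op bounded]])

lemma selfadjoint_pos_part: "selfadjoint pos_part"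
  using selfadjoint_abs_op
  by (simp add: selfadjoint_def pos_part_def cinner_scaleR_left cinner_scaleR_right
      cinner_add_left cinner_add_right cinner_A)

lemma pos_part_minus_neg_part: "pos_part v - neg_part v = A v"
  by (simp add: pos_part_def neg_part_def flip: scaleR_diff_right)

lemma neg_part_pos_part: "neg_part (pos_part v) = 0"
proof -
  have "abs_op (pos_part v) - A (pos_part v)
      = (1/2::real) *\<^sub>R ((abs_op (abs_op v) + abs_op (A v)) - (A (abs_op v) + A (A v)))"
    by (simp add: pos_part_def bounded_clinear_op_scaleR[OF bounded_clinear_op_abs_op]
        bounded_clinear_op_add[OF bounded_clinear_op_abs_op] bounded_clinear_op_scaleR[OF bounded]
        bounded_clinear_op_add[OF bounded] scaleR_diff_right)
  also have "\<dots> = 0" by (simp add: abs_op_sq abs_op_A)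
  finally show ?thesis by (simp add: neg_part_def)
qed

lemma parts_commute:
  assumes B: "bounded_clinear_op B" and comm: "\<And>v. B (A v) = A (B v)"
  shows "B (pos_part v) = pos_part (B v)" "B (neg_part v) = neg_part (B v)"
  using abs_op_commute[OF bounded_clinear_op_bounded_linear[OF B]]
  by (simp_all add: pos_part_def neg_part_def comm bounded_clinear_op_scaleR[OF B]
      bounded_clinear_op_add[OF B] bounded_clinear_op_diff[OF B])

lemma pos_part_anticommute:
  assumes B: "bounded_clinear_op B" and anti: "\<And>v. B (A v) = - A (B v)"
  shows "B (pos_part v) = neg_part (B v)"
proof -
  have "B (A (A v)) = A (A (B v))" for v
    by (simp add: anti bounded_clinear_op_minus bounded_clinear_op_linear[OF bounded] linear_neg)
  then show ?thesis
    using abs_op_commute[OF bounded_clinear_op_bounded_linear[OF B]]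
    by (simp add: pos_part_def neg_part_def anti bounded_clinear_op_scaleR[OF B]
        bounded_clinear_op_add[OF B])
qed

end

section \<open>Von Neumann algebras\<close>

lemma commutant_bounded: "B \<in> commutant M \<Longrightarrow> bounded_clinear_op B"
  unfolding commutant_def by blast

lemma commutant_commutes: "B \<in> commutant M \<Longrightarrow> A \<in> M \<Longrightarrow> B (A x) = A (B x)"
  unfolding commutant_def by (metis (mono_tags, lifting) comp_apply mem_Collect_eq)

context
  fixes M :: "('a::chilbert \<Rightarrow> 'a) set"
  assumes vN: "von_neumann_algebra M"
begin

lemma von_neumann_algebra_bounded: "A \<in> M \<Longrightarrow> bounded_clinear_op A"
  using vN unfolding von_neumann_algebra_def by blast

lemma von_neumann_algebra_add: "A \<in> M \<Longrightarrow> B \<in> M \<Longrightarrow> (\<lambda>x. A x + B x) \<in> M"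
  using vN unfolding von_neumann_algebra_def by blast

lemma von_neumann_algebra_scaleC: "A \<in> M \<Longrightarrow> (\<lambda>x. scaleC c (A x)) \<in> M"
  using vN unfolding von_neumann_algebra_def by blast

lemma von_neumann_algebra_adj: "A \<in> M \<Longrightarrow> adj A \<in> M"
  using vN unfolding von_neumann_algebra_def by blast

lemma von_neumann_algebra_comp: "A \<in> M \<Longrightarrow> B \<in> M \<Longrightarrow> A \<circ> B \<in> M"
  using vN unfolding von_neumann_algebra_def by blast

lemma von_neumann_algebra_diff: "A \<in> M \<Longrightarrow> B \<in> M \<Longrightarrow> (\<lambda>x. A x - B x) \<in> M"
  using von_neumann_algebra_add[OF _ von_neumann_algebra_scaleC[of B "-1"]]
  by (simp add: scaleC_minus_one)

lemma von_neumann_algebra_memI: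
  assumes "bounded_clinear_op T" and "\<And>B x. B \<in> commutant M \<Longrightarrow> T (B x) = B (T x)"
  shows "T \<in> M"
proof -
  have "T \<in> commutant (commutant M)"
    using assms unfolding commutant_def[of "commutant M"] by (auto simp: fun_eq_iff)
  then show ?thesis using vN unfolding von_neumann_algebra_def by simp
qed

lemma adj_mem_commutant:
  assumes B: "B \<in> commutant M"
  shows "adj B \<in> commutant M"
proof -
  have bB: "bounded_clinear_op B" using B by (rule commutant_bounded)
  have "adj B (A x) = A (adj B x)" if A: "A \<in> M" for A x
  proof (rule cinner_extensionality)
    fix z
    have bA: "bounded_clinear_op A" using von_neumann_algebra_bounded[OF A] .
    have "cinner z (adj B (A x)) = cinner (adj A (B z)) x"
      by (simp add: cinner_adj_right[OF bB, symmetric] cinner_adj_left[OF bA])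
    also have "adj A (B z) = B (adj A z)"
      using commutant_commutes[OF B von_neumann_algebra_adj[OF A]] by simp
    also have "cinner (B (adj A z)) x = cinner z (A (adj B x))"
      by (simp add: cinner_adj_right[OF bB] cinner_adj_left[OF bA])
    finally show "cinner z (adj B (A x)) = cinner z (A (adj B x))" .
  qed
  then show ?thesis
    unfolding commutant_def using bounded_clinear_op_adj[OF bB] by (auto simp: fun_eq_iff)
qed

text \<open>Every \<open>x \<in> M\<close> is a combination of the self-adjoint elements \<open>x + x\<^sup>*\<close> and \<open>i(x - x\<^sup>*)\<close>.\<close>

lemma commutant_if_commutes_selfadjoint:
  assumes T: "bounded_clinear_op T"
    and comm: "\<And>h v. h \<in> M \<Longrightarrow> selfadjoint h \<Longrightarrow> T (h v) = h (T v)"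
  shows "T \<in> commutant M"
proof -
  have "T (x v) = x (T v)" if x: "x \<in> M" for x v
  proof -
    have bx: "bounded_clinear_op x" using von_neumann_algebra_bounded[OF x] .
    define h1 where "h1 = (\<lambda>w. x w + adj x w)"
    define h2 where "h2 = (\<lambda>w. scaleC \<i> (x w - adj x w))"
    have h1M: "h1 \<in> M" unfolding h1_def
      using von_neumann_algebra_add[OF x von_neumann_algebra_adj[OF x]] .
    have h2M: "h2 \<in> M" unfolding h2_def
      using von_neumann_algebra_scaleC[OF von_neumann_algebra_diff[OF x von_neumann_algebra_adj[OF x]]] .
    have sa1: "selfadjoint h1"
      by (simp add: selfadjoint_def h1_def cinner_add_left cinner_add_right
          cinner_adj_right[OF bx] cinner_adj_left[OF bx])
    have sa2: "selfadjoint h2"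
      by (simp add: selfadjoint_def h2_def cinner_scaleC_left cinner_scaleC_right
          cinner_diff_left cinner_diff_right cinner_adj_right[OF bx] cinner_adj_left[OF bx]
          algebra_simps)
    from h1M h2M sa1 sa2 comm have c1: "T (h1 w) = h1 (T w)" and c2: "T (h2 w) = h2 (T w)" for w
      by simp_all
    have x_eq: "x w = scaleC (1/2) (h1 w - scaleC \<i> (h2 w))" for w
    proof -
      have "h1 w - scaleC \<i> (h2 w) = x w + x w"
        by (simp add: h1_def h2_def scaleC_scaleC scaleC_minus_one scaleC_diff_right)
      also have "\<dots> = scaleC 2 (x w)"
        using scaleC_add_left[of 1 1 "x w"] by (simp add: scaleC_one)
      finally show ?thesis by (simp add: scaleC_scaleC scaleC_one)
    qed
    have "T (x v) = scaleC (1/2) (T (h1 v) - scaleC \<i> (T (h2 v)))"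
      by (simp add: x_eq[of v] bounded_clinear_op_scaleC[OF T] bounded_clinear_op_diff[OF T])
    also have "\<dots> = x (T v)"
      by (simp add: c1 c2 x_eq[of "T v"])
    finally show ?thesis .
  qed
  then show ?thesis unfolding commutant_def using T by (auto simp: fun_eq_iff)
qed

end

lemma factor_involution_noncommuting:
  assumes "factor M" and "U \<in> M" and UU: "\<And>x. U (U x) = x"
    and "U \<noteq> id" and "U \<noteq> (\<lambda>x. - x)"
  shows "\<exists>h\<in>M. selfadjoint h \<and> (\<exists>v. U (h v) \<noteq> h (U v))"
proof (rule ccontr)
  assume "\<not> ?thesis"
  moreover have vN: "von_neumann_algebra M" using assms(1) by (simp add: factor_def)
  ultimately have "U \<in> commutant M"
    using commutant_if_commutes_selfadjoint von_neumann_algebra_bounded \<open>U \<in> M\<close> by blast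
  then obtain c where Uc: "U = (\<lambda>x. scaleC c x)"
    using assms(1,2) unfolding factor_def by blast
  from \<open>U \<noteq> id\<close> obtain v where v: "U v \<noteq> v" by (auto simp: fun_eq_iff)
  then have "v \<noteq> 0" by (auto simp: Uc)
  have "scaleC (c * c - 1) v = 0"
    using UU[of v] by (simp add: Uc scaleC_scaleC scaleC_diff_left scaleC_one)
  then have "(c - 1) * (c + 1) = 0"
    using \<open>v \<noteq> 0\<close> by (simp add: scaleC_eq_0_iff algebra_simps)
  moreover have "c \<noteq> 1" using v by (auto simp: Uc scaleC_one)
  ultimately have "c = -1" by (simp add: add_eq_0_iff) (metis minus_equation_iff)
  then show False using \<open>U \<noteq> (\<lambda>x. - x)\<close> by (simp add: Uc scaleC_minus_one)
qed

section \<open>A projection compressing an anticommuting involution to zero\<close>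

locale anticommuting_involution = selfadjoint_operator A
  for A :: "'a::chilbert \<Rightarrow> 'a" +
  fixes M :: "('a \<Rightarrow> 'a) set" and U :: "'a \<Rightarrow> 'a"
  assumes vN: "von_neumann_algebra M"
    and A_mem: "A \<in> M"
    and A_nonzero: "A \<noteq> (\<lambda>x. 0)"
    and U_bounded: "bounded_clinear_op U"
    and U_involution: "\<And>x. U (U x) = x"
    and U_anticommute: "\<And>x. U (A x) = - A (U x)"
begin

lemma U_pos_part: "U (pos_part v) = neg_part (U v)"
  by (rule pos_part_anticommute[OF U_bounded U_anticommute])

lemma pos_part_nonzero: "\<exists>v. pos_part v \<noteq> 0"
proof (rule ccontr)
  assume "\<not> ?thesis"
  then have "pos_part v = 0" and "neg_part v = 0" for v
    using U_pos_part[of "U v"] by (simp_all add: U_involution bounded_clinear_op_zero[OF U_bounded])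
  then have "A v = 0" for v using pos_part_minus_neg_part[of v] by simp
  with A_nonzero show False by auto
qed

lemma commutant_commutes_parts:
  assumes "B \<in> commutant M"
  shows "B (pos_part v) = pos_part (B v)" "B (neg_part v) = neg_part (B v)"
  using parts_commute[OF commutant_bounded[OF assms] commutant_commutes[OF assms A_mem]] by blast+

text \<open>This is \<open>(ker A\<^sub>+)\<^sup>\<bottom>\<close>, the closed range of \<open>A\<^sub>+\<close>; the condition \<open>A\<^sub>- y = 0\<close> is then
redundant, but stating it spares us identifying \<open>(ker A\<^sub>+)\<^sup>\<bottom>\<close> with the closure of the range.\<close>

definition pos_support :: "'a set" where
  "pos_support = {y. neg_part y = 0 \<and> (\<forall>z. pos_part z = 0 \<longrightarrow> cinner z y = 0)}"

lemma closed_pos_support: "closed pos_support"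
proof -
  have "pos_support = {y. neg_part y = 0} \<inter> (\<Inter>z\<in>{z. pos_part z = 0}. {y. cinner z y = 0})"
    unfolding pos_support_def by auto
  then show ?thesis
    by (simp only:) (intro closed_Int closed_INT ballI closed_Collect_eq continuous_on_const
        linear_continuous_on bounded_clinear_op_bounded_linear bounded_clinear_op_neg_part
        bounded_linear_cinner_right)
qed

lemma csubspace_pos_support: "csubspace pos_support"
  using bounded_clinear_op_neg_part
  by (auto simp: csubspace_def pos_support_def bounded_clinear_op_zero bounded_clinear_op_add
      bounded_clinear_op_scaleC cinner_add_right cinner_scaleC_right)

lemma pos_part_in_pos_support: "pos_part v \<in> pos_support"
proof -
  have "cinner z (pos_part v) = 0" if "pos_part z = 0" for z
    using selfadjoint_pos_part that by (metis cinner_zero_left selfadjoint_def)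
  then show ?thesis using neg_part_pos_part by (simp add: pos_support_def)
qed

lemma commutant_preserves_pos_support:
  assumes B: "B \<in> commutant M" and y: "y \<in> pos_support"
  shows "B y \<in> pos_support"
proof -
  have bB: "bounded_clinear_op B" using commutant_bounded[OF B] .
  have aB: "adj B \<in> commutant M" using adj_mem_commutant[OF vN B] .
  have "neg_part (B y) = 0"
    using y commutant_commutes_parts(2)[OF B, of y] bounded_clinear_op_zero[OF bB]
    by (simp add: pos_support_def)
  moreover have "cinner z (B y) = 0" if "pos_part z = 0" for z
  proof -
    have "pos_part (adj B z) = 0"
      using that commutant_commutes_parts(1)[OF aB, of z] bounded_clinear_op_zero[OF commutant_bounded[OF aB]]
      by simp
    then have "cinner (adj B z) y = 0" using y by (simp add: pos_support_def)
    then show ?thesis by (simp add: cinner_adj_left[OF bB])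
  qed
  ultimately show ?thesis by (simp add: pos_support_def)
qed

definition E :: "'a \<Rightarrow> 'a" where
  "E = orth_proj pos_support"

lemmas E_in = orth_proj_in[OF closed_pos_support csubspace_pos_support, folded E_def]
lemmas E_orthogonal = orth_proj_orthogonal[OF closed_pos_support csubspace_pos_support, folded E_def]
lemmas E_fixes = orth_proj_fixes[OF closed_pos_support csubspace_pos_support, folded E_def]
lemmas E_eq_0 = orth_proj_eq_0[OF closed_pos_support csubspace_pos_support, folded E_def]

lemma projection_op_E: "projection_op E"
  unfolding E_def by (rule projection_op_orth_proj[OF closed_pos_support csubspace_pos_support])

text \<open>\<open>E\<close> commutes with the commutant because \<open>ran E\<close> and \<open>ker E = (ran E)\<^sup>\<bottom>\<close> are invariant
under it (the latter since the commutant is closed under adjoints).\<close>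

lemma E_mem: "E \<in> M"
proof (rule von_neumann_algebra_memI[OF vN])
  show bE: "bounded_clinear_op E"
    using projection_op_E by (simp add: projection_op_def)
  fix B x assume B: "B \<in> commutant M"
  have bB: "bounded_clinear_op B" using commutant_bounded[OF B] .
  have "E (B (E x)) = B (E x)"
    by (rule E_fixes[OF commutant_preserves_pos_support[OF B E_in]])
  moreover have "E (B (x - E x)) = 0"
  proof (rule E_eq_0)
    fix k assume "k \<in> pos_support"
    then have "cinner (adj B k) (x - E x) = 0"
      by (rule E_orthogonal[OF commutant_preserves_pos_support[OF adj_mem_commutant[OF vN B]]])
    then show "cinner k (B (x - E x)) = 0" by (simp add: cinner_adj_left[OF bB])
  qed
  ultimately show "E (B x) = B (E x)"
    by (simp add: bounded_clinear_op_diff[OF bB] bounded_clinear_op_diff[OF bE])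
qed

lemma E_nonzero: "E \<noteq> (\<lambda>x. 0)"
proof
  assume "E = (\<lambda>x. 0)"
  moreover obtain v where "pos_part v \<noteq> 0" using pos_part_nonzero by blast
  ultimately show False using E_fixes[OF pos_part_in_pos_support, of v] by simp
qed

text \<open>\<open>U\<close> maps \<open>ran E \<subseteq> ker A\<^sub>-\<close> into \<open>ker A\<^sub>+ \<bottom> ran E\<close>.\<close>

lemma E_U_E: "E \<circ> U \<circ> E = (\<lambda>x. 0)"
proof
  fix x
  have "neg_part (E x) = 0" using E_in by (simp add: pos_support_def)
  then have "pos_part (U (E x)) = 0"
    by (metis U_involution U_pos_part bounded_clinear_op_zero[OF U_bounded])
  then have "E (U (E x)) = 0"
    by (intro E_eq_0) (auto simp: pos_support_def cinner_eq_0_sym)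
  then show "(E \<circ> U \<circ> E) x = 0" by simp
qed

lemma exists_projection: "\<exists>E\<in>M. projection_op E \<and> E \<noteq> (\<lambda>x. 0) \<and> E \<circ> U \<circ> E = (\<lambda>x. 0)"
  using E_mem projection_op_E E_nonzero E_U_E by blast

end

lemma imaginary_commutator:
  assumes vN: "von_neumann_algebra M" and "U \<in> M" "selfadjoint U" and UU: "\<And>x. U (U x) = x"
    and "h \<in> M" "selfadjoint h"
  defines "A \<equiv> \<lambda>v. scaleC \<i> (U (h v) - h (U v))"
  shows "A \<in> M" "selfadjoint A" "\<And>v. U (A v) = - A (U v)"
proof -
  have bU: "bounded_clinear_op U" using von_neumann_algebra_bounded[OF vN \<open>U \<in> M\<close>] .
  have "(\<lambda>v. U (h v) - h (U v)) \<in> M"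
    using von_neumann_algebra_diff[OF vN von_neumann_algebra_comp[OF vN \<open>U \<in> M\<close> \<open>h \<in> M\<close>]
        von_neumann_algebra_comp[OF vN \<open>h \<in> M\<close> \<open>U \<in> M\<close>]] by (simp add: comp_def)
  then show "A \<in> M"
    unfolding A_def by (rule von_neumann_algebra_scaleC[OF vN])
  show "selfadjoint A"
    using \<open>selfadjoint U\<close> \<open>selfadjoint h\<close>
    by (simp add: selfadjoint_def A_def cinner_scaleC_left cinner_scaleC_right cinner_diff_left
        cinner_diff_right algebra_simps)
  show "U (A v) = - A (U v)" for v
    by (simp add: A_def bounded_clinear_op_scaleC[OF bU] bounded_clinear_op_diff[OF bU] UU
        flip: scaleC_minus_right)
qed

theorem lemma2p3:
  fixes M :: "('a::chilbert \<Rightarrow> 'a) set" and U :: "'a \<Rightarrow> 'a"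
  assumes "factor M"
    and "U \<in> M"
    and "adj U = U"
    and "unitary_op U"
    and "U \<noteq> id"
    and "U \<noteq> (\<lambda>x. - x)"
  shows "\<exists>E\<in>M. projection_op E \<and> E \<noteq> (\<lambda>x. 0) \<and> E \<circ> U \<circ> E = (\<lambda>x. 0)"
proof -
  have vN: "von_neumann_algebra M" using \<open>factor M\<close> by (simp add: factor_def)
  have bU: "bounded_clinear_op U" using \<open>unitary_op U\<close> by (simp add: unitary_op_def)
  have UU: "U (U x) = x" for x
    using \<open>unitary_op U\<close> \<open>adj U = U\<close> by (metis comp_apply id_apply unitary_op_def)
  have "selfadjoint U"
    using cinner_adj_right[OF bU] \<open>adj U = U\<close> by (simp add: selfadjoint_def)
  obtain h v where "h \<in> M" "selfadjoint h" and noncomm: "U (h v) \<noteq> h (U v)"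
    using factor_involution_noncommuting[OF assms(1,2) UU assms(5,6)] by blast
  define A where "A = (\<lambda>v. scaleC \<i> (U (h v) - h (U v)))"
  have "A \<noteq> (\<lambda>x. 0)"
    using noncomm by (auto simp: A_def fun_eq_iff scaleC_eq_0_iff)
  moreover note imaginary_commutator[OF vN \<open>U \<in> M\<close> \<open>selfadjoint U\<close> UU \<open>h \<in> M\<close> \<open>selfadjoint h\<close>]
  ultimately interpret anticommuting_involution A M U
    using vN bU UU von_neumann_algebra_bounded[OF vN]
    by unfold_locales (auto simp: A_def)
  show ?thesis by (rule exists_projection)
qed

end
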